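(* Let $F$ be a chordal graph. (b) For every function $f:\wp(V_F)\to\mathbb R$, \[ \sum_{S\subseteq\mathsf{MaxCliques}(F)} -(-1)^{|S|} f\big({\textstyle\bigcap}S\big)=\sum_{A\subseteq V_F}(L_{V_F}f)(A)\cdot\mathsf{CC}(F|_A). \] (c) For every graph $G$, every homomorphism $\varphi:F\to G$, and every function $g:\wp(V_G)\to\mathbb R$, \[ \sum_{S\subseteq\mathsf{MaxCliques}(F)} -(-1)^{|S|} g\big(\varphi({\textstyle\bigcap}S)\big)=\sum_{A\subseteq V_G}(L_{V_G}g)(A)\cdot\mathsf{CC}\big(F|_{\varphi^{-1}(A)}\big). \]
   Context: Graphs are finite directed graphs; cliques, chordality, connectivity refer to the underlying simple undirected graph (edges $\{v,w\}$, $v\ne w$, with $(v,w)$ or $(w,v)$ an edge). $\mathsf{MaxCliques}(F)$ is the set of maximal cliques; $\bigcap S$ is the intersection of the family $S$, with $\bigcap\emptyset=\emptyset$; $\varphi(A)$ is the image of $A$. $F$ is chordal if its underlying simple graph has no induced cycle of length $\ge4$. $F|_A$ is the induced subgraph on $A$ and $\mathsf{CC}$ its number of connected components, with $\mathsf{CC}(F|_\emptyset)=0$. For a finite set $V$ and $f:\wp(V)\to\mathbb R$, $L_Vf:\wp(V)\to\mathbb R$ is defined by $(L_Vf)(A)=\sum_{B\subseteq V:\,A\cup B=V} -(-1)^{|A\cap B|} f(B)$. *)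

theory Defs
  imports Complex_Main
begin

text \<open>A finite directed graph: a vertex set and an edge set (loops allowed).\<close>
type_synonym 'a graph = "'a set \<times> ('a \<times> 'a) set"

definition verts :: "'a graph \<Rightarrow> 'a set" where "verts G = fst G"
definition edges :: "'a graph \<Rightarrow> ('a \<times> 'a) set" where "edges G = snd G"

definition graph :: "'a graph \<Rightarrow> bool" where
  "graph G \<longleftrightarrow> finite (verts G) \<and> edges G \<subseteq> verts G \<times> verts G"

text \<open>Adjacency in the underlying simple undirected graph.\<close>
definition adj :: "'a graph \<Rightarrow> 'a \<Rightarrow> 'a \<Rightarrow> bool" where
  "adj G v w \<longleftrightarrow> v \<noteq> w \<and> ((v, w) \<in> edges G \<or> (w, v) \<in> edges G)"

definition clique :: "'a graph \<Rightarrow> 'a set \<Rightarrow> bool" where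
  "clique G C \<longleftrightarrow> C \<subseteq> verts G \<and> (\<forall>v\<in>C. \<forall>w\<in>C. v \<noteq> w \<longrightarrow> adj G v w)"

definition MaxCliques :: "'a graph \<Rightarrow> 'a set set" where
  "MaxCliques G = {C. clique G C \<and> (\<forall>D. clique G D \<and> C \<subseteq> D \<longrightarrow> D = C)}"

text \<open>Intersection of a family, with the convention that the empty family has empty intersection.\<close>
definition Inter0 :: "'a set set \<Rightarrow> 'a set" where
  "Inter0 S = (if S = {} then {} else \<Inter> S)"

text \<open>Chordal: no induced cycle of length \<ge> 4 in the underlying simple graph.\<close>
definition chordal :: "'a graph \<Rightarrow> bool" where
  "chordal G \<longleftrightarrow> \<not> (\<exists>cs. length cs \<ge> 4 \<and> distinct cs \<and> set cs \<subseteq> verts G \<and>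
      (\<forall>i < length cs. \<forall>j < length cs.
          adj G (cs ! i) (cs ! j) \<longleftrightarrow>
            (j = (i + 1) mod length cs \<or> i = (j + 1) mod length cs)))"

definition conn :: "'a graph \<Rightarrow> 'a set \<Rightarrow> ('a \<times> 'a) set" where
  "conn G A = (Id_on A \<union> {(x, y). x \<in> A \<and> y \<in> A \<and> adj G x y})\<^sup>+"

text \<open>Number of connected components of the induced subgraph on A (0 for A empty).\<close>
definition CC :: "'a graph \<Rightarrow> 'a set \<Rightarrow> nat" where
  "CC G A = card (A // conn G A)"

definition L :: "'a set \<Rightarrow> ('a set \<Rightarrow> real) \<Rightarrow> 'a set \<Rightarrow> real" where
  "L V f A = (\<Sum>B \<in> {B. B \<subseteq> V \<and> A \<union> B = V}. - ((-1) ^ card (A \<inter> B)) * f B)"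

definition hom :: "'a graph \<Rightarrow> 'b graph \<Rightarrow> ('a \<Rightarrow> 'b) \<Rightarrow> bool" where
  "hom F G \<phi> \<longleftrightarrow> (\<forall>v \<in> verts F. \<phi> v \<in> verts G) \<and>
     (\<forall>(v, w) \<in> edges F. (\<phi> v, \<phi> w) \<in> edges G)"

end

theory Submission
  imports Defs
begin

text \<open>
  For a vertex set A of F write \<open>\<chi>(A)\<close> for the Euler characteristic of the
  clique complex of F restricted to A, i.e. the alternating count of nonempty cliques inside A.
  Both CC and \<open>\<chi>\<close> satisfy the same deletion recursion
  \<open>X(A) = X(A - {v}) + 1 - X(N)\<close>, N the neighbours of v in A: for \<open>\<chi>\<close> this is pure
  counting (cliques through v are v plus cliques in N), for CC it needs chordality, which
  guarantees that neighbours of v joined by a path avoiding v are already joined inside N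
  (a shortest counterexample path would close up with v to an induced cycle of length \<open>\<ge> 4\<close>).
  Hence \<open>CC = \<chi>\<close> on every vertex set. Counting each clique via the maximal cliques
  containing it (inclusion-exclusion over the nerve) gives
  \<open>\<chi>(A) = \<Sum>S\<noteq>{}. -(-1)^|S| [\<Inter>S meets A]\<close>, and a Moebius inversion computation shows
  \<open>\<Sum>A. (L g)(A) [I meets A] = g I - g {}\<close>. Substituting and exchanging sums yields the
  formula (c) for every map into a finite set; (b) is the special case of the identity map.
\<close>

section \<open>Alternating sums over power sets\<close>

lemma alternating_sum_Pow:
  assumes "finite X"
  shows "(\<Sum>T\<in>Pow X. (-1::real) ^ card T) = (if X = {} then 1 else 0)"
proof (cases "X = {}")
  case False
  have "card {T. T \<subseteq> X \<and> {} \<subseteq> T \<and> even (card T)} = card {T. T \<subseteq> X \<and> {} \<subseteq> T \<and> odd (card T)}"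
    using assms False by (intro card_subsupersets_even_odd) auto
  then have "(\<Sum>T\<in>Pow X. (-1::real) ^ card T) = 0"
    using assms by (intro sum_alternating_cancels) (simp_all add: Pow_def)
  then show ?thesis using False by simp
qed simp

lemma alternating_sum_Pow_nonempty:
  assumes "finite X"
  shows "(\<Sum>T\<in>Pow X - {{}}. - ((-1::real) ^ card T)) = (if X = {} then 0 else 1)"
proof -
  have "(\<Sum>T\<in>Pow X - {{}}. - ((-1::real) ^ card T))
      = (\<Sum>T\<in>Pow X. - ((-1::real) ^ card T)) + 1"
    using assms by (subst sum.remove[of "Pow X" "{}"]) auto
  then show ?thesis using alternating_sum_Pow[OF assms] by (simp add: sum_negf)
qed

lemma alternating_sum_Pow_within:
  assumes "finite X"
  shows "(\<Sum>T\<in>Pow X - {{}}. - ((-1::real) ^ card T) * (if T \<subseteq> Y then 1 else 0))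
       = (if X \<inter> Y \<noteq> {} then 1 else 0)"
proof -
  have "(\<Sum>T\<in>Pow X - {{}}. - ((-1::real) ^ card T) * (if T \<subseteq> Y then 1 else 0))
      = (\<Sum>T\<in>Pow (X \<inter> Y) - {{}}. - ((-1::real) ^ card T) * (if T \<subseteq> Y then 1 else 0))"
    using assms by (intro sum.mono_neutral_right) auto
  also have "\<dots> = (\<Sum>T\<in>Pow (X \<inter> Y) - {{}}. - ((-1::real) ^ card T))"
    by (intro sum.cong) auto
  also have "\<dots> = (if X \<inter> Y = {} then 0 else 1)"
    by (rule alternating_sum_Pow_nonempty) (use assms in simp)
  finally show ?thesis by simp
qed

lemma sum_Pow_insert:
  assumes "finite X" "x \<notin> X"
  shows "(\<Sum>T\<in>Pow (insert x X). f T) = (\<Sum>T\<in>Pow X. f T) + (\<Sum>T\<in>Pow X. f (insert x T))"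
proof -
  have inj: "inj_on (insert x) (Pow X)"
    using assms(2) by (intro inj_onI) (metis PowD insert_ident subsetD)
  have "(\<Sum>T\<in>Pow (insert x X). f T) = (\<Sum>T\<in>Pow X. f T) + (\<Sum>T\<in>insert x ` Pow X. f T)"
    unfolding Pow_insert using assms by (intro sum.union_disjoint) auto
  also have "(\<Sum>T\<in>insert x ` Pow X. f T) = (\<Sum>T\<in>Pow X. f (insert x T))"
    using inj by (simp add: sum.reindex)
  finally show ?thesis .
qed


section \<open>Walks and connected components\<close>

lemma adj_sym: "adj G v w \<longleftrightarrow> adj G w v"
  unfolding adj_def by auto

lemma adj_irrefl: "\<not> adj G v v"
  unfolding adj_def by auto

definition walk :: "'a graph \<Rightarrow> 'a set \<Rightarrow> 'a list \<Rightarrow> bool" where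
  "walk G B p \<longleftrightarrow> set p \<subseteq> B \<and> (\<forall>i. Suc i < length p \<longrightarrow> adj G (p!i) (p!Suc i))"

lemma walk_Nil [simp]: "walk G B []"
  by (simp add: walk_def)

lemma walk_Cons: "walk G B (a # q) \<longleftrightarrow> a \<in> B \<and> walk G B q \<and> (q \<noteq> [] \<longrightarrow> adj G a (hd q))"
  by (cases q) (auto simp: walk_def nth_Cons split: nat.splits)

lemma walk_append:
  "walk G B (xs @ ys) \<longleftrightarrow> walk G B xs \<and> walk G B ys \<and> (xs \<noteq> [] \<and> ys \<noteq> [] \<longrightarrow> adj G (last xs) (hd ys))"
  by (induction xs) (auto simp: walk_Cons)

lemma walk_take: "walk G B p \<Longrightarrow> walk G B (take n p)"
  and walk_drop: "walk G B p \<Longrightarrow> walk G B (drop n p)"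
  using walk_append[of G B "take n p" "drop n p"] by simp_all

lemma walk_mono: "walk G B p \<Longrightarrow> B \<subseteq> B' \<Longrightarrow> walk G B' p"
  unfolding walk_def by auto

lemma walk_set: "walk G B p \<Longrightarrow> set p \<subseteq> B"
  unfolding walk_def by auto

lemma walk_adj: "walk G B p \<Longrightarrow> Suc i < length p \<Longrightarrow> adj G (p!i) (p!Suc i)"
  unfolding walk_def by auto

lemma conn_sub: "conn G B \<subseteq> B \<times> B"
  unfolding conn_def by (rule trancl_subset_Sigma) auto

lemma conn_refl: "x \<in> B \<Longrightarrow> (x, x) \<in> conn G B"
  unfolding conn_def by auto

lemma conn_adj: "x \<in> B \<Longrightarrow> y \<in> B \<Longrightarrow> adj G x y \<Longrightarrow> (x, y) \<in> conn G B"
  unfolding conn_def by auto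

lemma conn_trans: "(x, y) \<in> conn G B \<Longrightarrow> (y, z) \<in> conn G B \<Longrightarrow> (x, z) \<in> conn G B"
  unfolding conn_def by auto

lemma conn_walk: "(x, y) \<in> conn G B \<longleftrightarrow> (\<exists>p. walk G B p \<and> p \<noteq> [] \<and> hd p = x \<and> last p = y)"
proof
  assume "(x, y) \<in> conn G B"
  then show "\<exists>p. walk G B p \<and> p \<noteq> [] \<and> hd p = x \<and> last p = y"
    unfolding conn_def
  proof (induction rule: trancl_induct)
    case (base y)
    then show ?case
      by (auto simp: walk_Cons intro: exI[of _ "[x]"] exI[of _ "[x, y]"])
  next
    case (step y z)
    then obtain p where p: "walk G B p" "p \<noteq> []" "hd p = x" "last p = y" by blast
    from step(2) show ?case
    proof
      assume "(y, z) \<in> Id_on B"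
      then show ?thesis using p by auto
    next
      assume "(y, z) \<in> {(x, y). x \<in> B \<and> y \<in> B \<and> adj G x y}"
      then show ?thesis using p
        by (intro exI[of _ "p @ [z]"]) (auto simp: walk_append walk_Cons)
    qed
  qed
next
  assume "\<exists>p. walk G B p \<and> p \<noteq> [] \<and> hd p = x \<and> last p = y"
  then obtain p where "walk G B p" "p \<noteq> []" "hd p = x" "last p = y" by blast
  then show "(x, y) \<in> conn G B"
  proof (induction p arbitrary: x)
    case Nil then show ?case by simp
  next
    case (Cons a q)
    show ?case
    proof (cases "q = []")
      case True
      then show ?thesis using Cons.prems unfolding conn_def by (auto simp: walk_Cons)
    next
      case False
      have "(hd q, y) \<in> conn G B" using Cons False by (auto simp: walk_Cons)
      moreover have "(a, hd q) \<in> conn G B"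
        using Cons.prems False walk_set[of G B q] hd_in_set[of q]
        by (intro conn_adj) (auto simp: walk_Cons)
      ultimately show ?thesis using Cons.prems unfolding conn_def by auto
    qed
  qed
qed

lemma conn_equiv: "equiv B (conn G B)"
proof (rule equivI)
  show "conn G B \<subseteq> B \<times> B" by (rule conn_sub)
  show "refl_on B (conn G B)" by (rule refl_onI) (rule conn_refl)
  have "sym (Id_on B \<union> {(x, y). x \<in> B \<and> y \<in> B \<and> adj G x y})"
    unfolding sym_def by (auto simp: adj_sym)
  then show "sym (conn G B)" unfolding conn_def by (rule sym_trancl)
  show "trans (conn G B)" by (rule transI) (rule conn_trans)
qed

lemma conn_mono: "B \<subseteq> B' \<Longrightarrow> conn G B \<subseteq> conn G B'"
proof (intro subrelI)
  fix x y assume "B \<subseteq> B'" "(x, y) \<in> conn G B"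
  then show "(x, y) \<in> conn G B'" unfolding conn_walk by (blast intro: walk_mono)
qed


section \<open>Shortest walks and chordality\<close>

lemma walk_shortcut:
  assumes w: "walk G B p" and ij: "i < j" "j < length p"
    and c: "p!i = p!j \<or> (adj G (p!i) (p!j) \<and> Suc i < j)"
  shows "\<exists>q. walk G B q \<and> q \<noteq> [] \<and> hd q = hd p \<and> last q = last p \<and> length q < length p"
proof -
  have h: "hd (drop j p) = p!j" using ij by (simp add: hd_drop_conv_nth)
  have hp: "hd p = p!0" using ij by (cases p) auto
  have last_take: "last (take (Suc k) p) = p!k" if "k < length p" for k
    using that by (simp add: take_Suc_conv_app_nth)
  consider (repeat_start) "p!0 = p!j" "i = 0" | (repeat) i' where "p!i = p!j" "i = Suc i'"
    | (chord) "adj G (p!i) (p!j)" "Suc i < j"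
    using c by (cases i) auto
  then show ?thesis
  proof cases
    case repeat_start
    then show ?thesis using ij w h hp by (intro exI[of _ "drop j p"]) (auto simp: walk_drop)
  next
    case repeat
    have "adj G (p!i') (p!j)" using walk_adj[OF w, of i'] repeat ij by simp
    then have "walk G B (take i p @ drop j p)"
      unfolding walk_append using walk_take[OF w] walk_drop[OF w] last_take[of i'] h repeat ij by simp
    moreover have "hd (take i p @ drop j p) = hd p" using repeat ij by (cases p) auto
    ultimately show ?thesis using repeat ij by (intro exI[of _ "take i p @ drop j p"]) auto
  next
    case chord
    then have "walk G B (take (Suc i) p @ drop j p)"
      unfolding walk_append using walk_take[OF w] walk_drop[OF w] last_take[of i] h ij by simp
    moreover have "hd (take (Suc i) p @ drop j p) = hd p" using ij by (cases p) auto
    ultimately show ?thesis using chord ij by (intro exI[of _ "take (Suc i) p @ drop j p"]) auto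
  qed
qed

lemma shortest_walk_induced:
  assumes w: "walk G B p"
    and shortest: "\<And>q. walk G B q \<Longrightarrow> q \<noteq> [] \<Longrightarrow> hd q = hd p \<Longrightarrow> last q = last p \<Longrightarrow> length p \<le> length q"
  shows "distinct p"
    and "a < length p \<Longrightarrow> b < length p \<Longrightarrow> adj G (p!a) (p!b) \<longleftrightarrow> b = Suc a \<or> a = Suc b"
proof -
  have no_shortcut: "p!i \<noteq> p!j \<and> (adj G (p!i) (p!j) \<longrightarrow> j = Suc i)" if ij: "i < j" "j < length p" for i j
  proof (rule ccontr)
    assume "\<not> ?thesis"
    then have "p!i = p!j \<or> (adj G (p!i) (p!j) \<and> Suc i < j)" using ij by auto
    then show False using walk_shortcut[OF w ij] shortest by fastforce
  qed
  show "distinct p" unfolding distinct_conv_nth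
  proof (intro allI impI)
    fix i j assume "i < length p" "j < length p" "i \<noteq> j"
    then show "p!i \<noteq> p!j" using no_shortcut[of i j] no_shortcut[of j i] by (cases "i < j") auto
  qed
  assume ab: "a < length p" "b < length p"
  show "adj G (p!a) (p!b) \<longleftrightarrow> b = Suc a \<or> a = Suc b"
  proof
    assume ad: "adj G (p!a) (p!b)"
    consider "a < b" | "a = b" | "b < a" by arith
    then show "b = Suc a \<or> a = Suc b"
    proof cases
      case 1 then show ?thesis using no_shortcut[of a b] ad ab by auto
    next
      case 2 then show ?thesis using ad adj_irrefl by metis
    next
      case 3 then show ?thesis using no_shortcut[of b a] ad ab adj_sym by metis
    qed
  next
    assume "b = Suc a \<or> a = Suc b"
    then show "adj G (p!a) (p!b)" using walk_adj[OF w, of a] walk_adj[OF w, of b] ab adj_sym[of G] by auto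
  qed
qed

lemma induced_cycle_not_chordal:
  fixes F :: "'a graph"
  assumes ch: "chordal F" and v: "v \<in> verts F" "v \<notin> set p"
    and p: "set p \<subseteq> verts F" "distinct p" "length p \<ge> 3"
    and path: "\<And>a b. a < length p \<Longrightarrow> b < length p \<Longrightarrow> adj F (p!a) (p!b) \<longleftrightarrow> b = Suc a \<or> a = Suc b"
    and ends: "\<And>t. t < length p \<Longrightarrow> adj F v (p!t) \<longleftrightarrow> t = 0 \<or> t = length p - 1"
  shows False
proof -
  define n where "n = length p"
  define cs where "cs = v # p"
  have lcs: "length cs = Suc n" unfolding cs_def n_def by simp
  have n3: "n \<ge> 3" using p(3) unfolding n_def .
  have cs0: "cs ! 0 = v" and csS: "\<And>k. cs ! Suc k = p ! k" unfolding cs_def by simp_all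
  have succ: "(k + 1) mod length cs = (if k = n then 0 else k + 1)" if "k < length cs" for k
    using that lcs by auto
  have cycle: "adj F (cs ! i) (cs ! j) \<longleftrightarrow> (j = (i + 1) mod length cs \<or> i = (j + 1) mod length cs)"
    if i: "i < length cs" and j: "j < length cs" for i j
  proof -
    have "adj F (cs ! i) (cs ! j) \<longleftrightarrow> (j = (if i = n then 0 else i + 1) \<or> i = (if j = n then 0 else j + 1))"
    proof (cases i; cases j)
      assume "i = 0" "j = 0"
      then show ?thesis using n3 adj_irrefl by (simp add: cs0)
    next
      fix j' assume "i = 0" "j = Suc j'"
      then have "j' < n" using j lcs by simp
      then show ?thesis using \<open>i = 0\<close> \<open>j = Suc j'\<close> ends[of j'] n3 unfolding n_def[symmetric]
        by (auto simp: cs0 csS)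
    next
      fix i' assume "i = Suc i'" "j = 0"
      then have "i' < n" using i lcs by simp
      then show ?thesis using \<open>i = Suc i'\<close> \<open>j = 0\<close> ends[of i'] n3 adj_sym[of F v] unfolding n_def[symmetric]
        by (auto simp: cs0 csS)
    next
      fix i' j' assume "i = Suc i'" "j = Suc j'"
      then have "i' < n" "j' < n" using i j lcs by simp_all
      then show ?thesis using \<open>i = Suc i'\<close> \<open>j = Suc j'\<close> path[of i' j'] n3 unfolding n_def[symmetric]
        by (auto simp: csS)
    qed
    then show ?thesis using succ i j by simp
  qed
  have "length cs \<ge> 4" "distinct cs" "set cs \<subseteq> verts F"
    using lcs n3 p v unfolding cs_def by auto
  then show False using ch cycle unfolding chordal_def by blast
qed

definition nbhd :: "'a graph \<Rightarrow> 'a set \<Rightarrow> 'a \<Rightarrow> 'a set" where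
  "nbhd F A v = {w \<in> A - {v}. adj F v w}"

lemma nbhd_subset: "nbhd F A v \<subseteq> A - {v}"
  unfolding nbhd_def by auto

lemma minimal_crossing_walk:
  assumes w: "walk G B p" and ne: "p \<noteq> []" and ends_N: "hd p \<in> N" "last p \<in> N"
    and not_conn: "(hd p, last p) \<notin> conn G N"
    and minimal: "\<And>q. walk G B q \<Longrightarrow> q \<noteq> [] \<Longrightarrow> hd q \<in> N \<Longrightarrow> last q \<in> N \<Longrightarrow>
      (hd q, last q) \<notin> conn G N \<Longrightarrow> length p \<le> length q"
  shows "length p \<ge> 3" and "\<And>i. 0 < i \<Longrightarrow> Suc i < length p \<Longrightarrow> p!i \<notin> N"
proof -
  have h0: "hd p = p!0" and hl: "last p = p!(length p - 1)"
    using ne by (simp_all add: hd_conv_nth last_conv_nth)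
  show "length p \<ge> 3"
  proof (rule ccontr)
    assume "\<not> length p \<ge> 3"
    moreover have "length p \<noteq> 0" using ne by simp
    ultimately consider "length p = 1" | "length p = 2" by linarith
    then have "(hd p, last p) \<in> conn G N"
    proof cases
      case 1 then show ?thesis using h0 hl ends_N by (simp add: conn_refl)
    next
      case 2 then show ?thesis using walk_adj[OF w, of 0] h0 hl ends_N
        by (intro conn_adj) simp_all
    qed
    then show False using not_conn by simp
  qed
  fix i assume i: "0 < i" "Suc i < length p"
  show "p!i \<notin> N"
  proof
    assume iN: "p!i \<in> N"
    have "(hd p, p!i) \<notin> conn G N \<or> (p!i, last p) \<notin> conn G N"
      using not_conn conn_trans[of "hd p" "p!i" G N "last p"] by blast
    then show False
    proof
      assume "(hd p, p!i) \<notin> conn G N"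
      moreover have "walk G B (take (Suc i) p)" "take (Suc i) p \<noteq> []" "hd (take (Suc i) p) = hd p"
        using walk_take[OF w] ne by (auto simp: hd_conv_nth)
      moreover have "last (take (Suc i) p) = p!i" using i by (simp add: take_Suc_conv_app_nth)
      ultimately show False using minimal[of "take (Suc i) p"] iN ends_N i by simp
    next
      assume "(p!i, last p) \<notin> conn G N"
      moreover have "walk G B (drop i p)" "drop i p \<noteq> []" "hd (drop i p) = p!i" "last (drop i p) = last p"
        using w i by (auto simp: walk_drop hd_drop_conv_nth)
      ultimately show False using minimal[of "drop i p"] iN ends_N i by simp
    qed
  qed
qed

text \<open>The key consequence of chordality: two neighbours of v that are connected in
  \<open>A - {v}\<close> are already connected inside the neighbourhood of v. A shortest walk violating
  this is an induced path meeting the neighbourhood only at its ends, and closes up with v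
  to an induced cycle of length at least 4.\<close>
lemma chordal_nbhd_conn:
  fixes F :: "'a graph"
  assumes ch: "chordal F" and AV: "A \<subseteq> verts F" and vA: "v \<in> A"
    and xy: "x \<in> nbhd F A v" "y \<in> nbhd F A v" "(x, y) \<in> conn F (A - {v})"
  shows "(x, y) \<in> conn F (nbhd F A v)"
proof (rule ccontr)
  define N where "N = nbhd F A v"
  define A' where "A' = A - {v}"
  define bad where "bad p \<longleftrightarrow> walk F A' p \<and> p \<noteq> [] \<and> hd p \<in> N \<and> last p \<in> N \<and> (hd p, last p) \<notin> conn F N" for p
  assume "(x, y) \<notin> conn F (nbhd F A v)"
  moreover obtain p0 where "walk F A' p0" "p0 \<noteq> []" "hd p0 = x" "last p0 = y"
    using xy(3) unfolding conn_walk A'_def by blast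
  ultimately have "bad p0" using xy unfolding bad_def N_def by blast
  then obtain p where p: "bad p" and minimal: "\<And>q. bad q \<Longrightarrow> length p \<le> length q"
    using ex_has_least_nat[of bad p0 length] by blast
  then have w: "walk F A' p" and ne: "p \<noteq> []" and ends_N: "hd p \<in> N" "last p \<in> N"
    and not_conn: "(hd p, last p) \<notin> conn F N" unfolding bad_def by auto
  note crossing = minimal_crossing_walk[OF w ne ends_N not_conn minimal[unfolded bad_def]]
  have shortest: "length p \<le> length q"
    if "walk F A' q" "q \<noteq> []" "hd q = hd p" "last q = last p" for q
    using that p minimal unfolding bad_def by simp
  note induced = shortest_walk_induced[OF w shortest]
  have pA: "set p \<subseteq> A'" using w walk_set by blast
  have ends: "adj F v (p!t) \<longleftrightarrow> t = 0 \<or> t = length p - 1" if "t < length p" for t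
  proof -
    have "p!t \<in> A'" using pA that by auto
    then have "adj F v (p!t) \<longleftrightarrow> p!t \<in> N" unfolding N_def A'_def nbhd_def by auto
    then show ?thesis using crossing(2)[of t] ends_N ne that
      by (fastforce simp: hd_conv_nth last_conv_nth)
  qed
  have "v \<notin> set p" "set p \<subseteq> verts F" using pA AV unfolding A'_def by auto
  then show False
    using induced_cycle_not_chordal[OF ch _ _ _ induced(1) crossing(1) induced(2) ends] vA AV
    by blast
qed


section \<open>The deletion recursion for connected components\<close>

lemma card_image_same_fibres:
  assumes "\<And>x y. x \<in> N \<Longrightarrow> y \<in> N \<Longrightarrow> f x = f y \<longleftrightarrow> g x = g y"
  shows "card (f ` N) = card (g ` N)"
proof -
  define h where "h K = g (inv_into N f K)" for K
  have hf: "h (f x) = g x" if "x \<in> N" for x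
    using assms[of "inv_into N f (f x)" x] that
    by (simp add: h_def inv_into_into f_inv_into_f)
  have "inj_on h (f ` N)" by (rule inj_onI) (auto simp: hf assms)
  moreover have "h ` f ` N = g ` N" using hf by (auto simp: image_image)
  ultimately show ?thesis by (metis card_image)
qed

lemma quotient_image: "B // r = (\<lambda>x. r``{x}) ` B"
  unfolding quotient_def by auto

lemma card_components_meeting:
  assumes NB: "N \<subseteq> B"
    and conn_N: "\<And>x y. x \<in> N \<Longrightarrow> y \<in> N \<Longrightarrow> (x, y) \<in> conn G B \<Longrightarrow> (x, y) \<in> conn G N"
  shows "card {K \<in> B // conn G B. K \<inter> N \<noteq> {}} = CC G N"
proof -
  define R where "R = conn G B"
  have eR: "equiv B R" unfolding R_def by (rule conn_equiv)
  have meeting: "{K \<in> B // R. K \<inter> N \<noteq> {}} = (\<lambda>x. R``{x}) ` N"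
  proof
    show "{K \<in> B // R. K \<inter> N \<noteq> {}} \<subseteq> (\<lambda>x. R``{x}) ` N"
    proof
      fix K assume "K \<in> {K \<in> B // R. K \<inter> N \<noteq> {}}"
      then obtain x y where "x \<in> B" "K = R``{x}" "y \<in> K" "y \<in> N"
        by (auto elim!: quotientE)
      then show "K \<in> (\<lambda>x. R``{x}) ` N" using equiv_class_eq[OF eR, of x y] by auto
    qed
    show "(\<lambda>x. R``{x}) ` N \<subseteq> {K \<in> B // R. K \<inter> N \<noteq> {}}"
      using NB equiv_class_self[OF eR] by (auto intro: quotientI)
  qed
  have "card {K \<in> B // R. K \<inter> N \<noteq> {}} = card ((\<lambda>x. R``{x}) ` N)"
    by (simp only: meeting)
  also have "\<dots> = card ((\<lambda>x. conn G N``{x}) ` N)"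
  proof (rule card_image_same_fibres)
    fix x y assume xy: "x \<in> N" "y \<in> N"
    have "R``{x} = R``{y} \<longleftrightarrow> (x, y) \<in> R"
      using xy NB by (intro eq_equiv_class_iff[OF eR]) auto
    also have "\<dots> \<longleftrightarrow> (x, y) \<in> conn G N"
      using conn_N[OF xy] conn_mono[OF NB] unfolding R_def by blast
    also have "\<dots> \<longleftrightarrow> conn G N``{x} = conn G N``{y}"
      using xy by (intro eq_equiv_class_iff[OF conn_equiv, symmetric])
    finally show "R``{x} = R``{y} \<longleftrightarrow> conn G N``{x} = conn G N``{y}" .
  qed
  also have "\<dots> = CC G N" by (simp add: CC_def quotient_image)
  finally show ?thesis unfolding R_def .
qed

lemma walk_reaches_nbhd:
  assumes "walk G A p" "p \<noteq> []" "hd p \<in> A - {v}" "v \<in> set p"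
  shows "\<exists>n \<in> nbhd G A v. (hd p, n) \<in> conn G (A - {v})"
  using assms
proof (induction p)
  case Nil then show ?case by simp
next
  case (Cons a q)
  have aA: "a \<in> A - {v}" and qne: "q \<noteq> []" using Cons.prems by auto
  have wq: "walk G A q" and adq: "adj G a (hd q)" using Cons.prems(1) qne by (auto simp: walk_Cons)
  show ?case
  proof (cases "hd q = v")
    case True
    then have "a \<in> nbhd G A v" using aA adq adj_sym[of G] unfolding nbhd_def by auto
    moreover have "(a, a) \<in> conn G (A - {v})" using aA by (rule conn_refl)
    ultimately show ?thesis by auto
  next
    case False
    moreover have "hd q \<in> A" using walk_set[OF wq] hd_in_set[OF qne] by blast
    ultimately have hq: "hd q \<in> A - {v}" by simp
    obtain n where n: "n \<in> nbhd G A v" "(hd q, n) \<in> conn G (A - {v})"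
      using Cons.IH[OF wq qne hq] Cons.prems(4) aA by auto
    have "(a, hd q) \<in> conn G (A - {v})" using aA hq adq by (rule conn_adj)
    then have "(a, n) \<in> conn G (A - {v})" using n(2) by (rule conn_trans)
    then show ?thesis using n(1) by auto
  qed
qed

lemma component_avoiding_nbhd:
  assumes x: "x \<in> A - {v}" and avoid: "conn G (A - {v})``{x} \<inter> nbhd G A v = {}"
  shows "conn G A``{x} = conn G (A - {v})``{x}"
proof
  show "conn G A``{x} \<subseteq> conn G (A - {v})``{x}"
  proof
    fix y assume "y \<in> conn G A``{x}"
    then obtain p where p: "walk G A p" "p \<noteq> []" "hd p = x" "last p = y"
      unfolding Image_singleton_iff conn_walk by blast
    have "v \<notin> set p" using walk_reaches_nbhd[OF p(1,2)] p(3) x avoid by auto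
    then have "walk G (A - {v}) p" using p(1) unfolding walk_def by auto
    then show "y \<in> conn G (A - {v})``{x}" using p unfolding Image_singleton_iff conn_walk by blast
  qed
  show "conn G (A - {v})``{x} \<subseteq> conn G A``{x}" using conn_mono[of "A - {v}" A G] by blast
qed

lemma component_meeting_nbhd:
  assumes vA: "v \<in> A" and n: "n \<in> conn G (A - {v})``{x}" "n \<in> nbhd G A v"
  shows "conn G A``{x} = conn G A``{v}"
proof -
  have "(n, v) \<in> conn G A"
    using n(2) vA adj_sym[of G] unfolding nbhd_def by (intro conn_adj) auto
  moreover have "(x, n) \<in> conn G A" using n(1) conn_mono[of "A - {v}" A G] by blast
  ultimately have "(x, v) \<in> conn G A" by (rule conn_trans[rotated])
  then show ?thesis by (rule equiv_class_eq[OF conn_equiv])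
qed

text \<open>Deleting a vertex v from A: the component of v disappears, components of \<open>A - {v}\<close>
  avoiding the neighbourhood of v survive unchanged, and the others merge into that of v.\<close>
lemma CC_delete_vertex:
  assumes fin: "finite A" and vA: "v \<in> A"
  shows "CC G A = Suc (card {K \<in> (A - {v}) // conn G (A - {v}). K \<inter> nbhd G A v = {}})"
proof -
  define R where "R = conn G A"
  define R' where "R' = conn G (A - {v})"
  define D where "D = {K \<in> (A - {v}) // R'. K \<inter> nbhd G A v = {}}"
  have R'_sub: "R' \<subseteq> (A - {v}) \<times> (A - {v})" unfolding R'_def by (rule conn_sub)
  have classes: "A // R = insert (R``{v}) D"
  proof
    show "A // R \<subseteq> insert (R``{v}) D"
    proof
      fix K assume "K \<in> A // R"
      then obtain x where x: "x \<in> A" "K = R``{x}" by (auto elim!: quotientE)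
      show "K \<in> insert (R``{v}) D"
      proof (cases "x = v \<or> R'``{x} \<inter> nbhd G A v \<noteq> {}")
        case True
        then show ?thesis using x component_meeting_nbhd[OF vA, of _ G x] unfolding R_def R'_def by blast
      next
        case False
        then have "x \<in> A - {v}" "K = R'``{x}" "R'``{x} \<inter> nbhd G A v = {}"
          using x component_avoiding_nbhd[of x A v G] unfolding R_def R'_def by auto
        then show ?thesis unfolding D_def by (auto intro: quotientI)
      qed
    qed
    show "insert (R``{v}) D \<subseteq> A // R"
    proof
      fix K assume "K \<in> insert (R``{v}) D"
      then consider "K = R``{v}" | x where "x \<in> A - {v}" "K = R'``{x}" "R'``{x} \<inter> nbhd G A v = {}"
        unfolding D_def by (auto elim!: quotientE)
      then show "K \<in> A // R"
      proof cases
        case 1 then show ?thesis using vA by (simp add: quotientI)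
      next
        case 2
        then have "K = R``{x}" "x \<in> A" using component_avoiding_nbhd[of x A v G]
          unfolding R_def R'_def by auto
        then show ?thesis by (simp add: quotientI)
      qed
    qed
  qed
  have "v \<in> R``{v}" unfolding R_def using vA by (rule equiv_class_self[OF conn_equiv])
  moreover have "K \<subseteq> A - {v}" if "K \<in> D" for K
    using that R'_sub unfolding D_def by (auto elim!: quotientE)
  ultimately have "R``{v} \<notin> D" by blast
  moreover have "finite ((A - {v}) // R')"
    using fin unfolding R'_def by (intro finite_quotient[OF _ conn_sub]) simp
  then have "finite D" unfolding D_def by simp
  ultimately show ?thesis unfolding CC_def R_def[symmetric] classes D_def R'_def by simp
qed

lemma CC_step:
  fixes F :: "'a graph"
  assumes ch: "chordal F" and AV: "A \<subseteq> verts F" and fin: "finite A" and vA: "v \<in> A"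
  shows "real (CC F A) = real (CC F (A - {v})) + 1 - real (CC F (nbhd F A v))"
proof -
  define E where "E = (A - {v}) // conn F (A - {v})"
  define N where "N = nbhd F A v"
  have "finite E" unfolding E_def using fin by (intro finite_quotient[OF _ conn_sub]) simp
  then have "card E = card {K \<in> E. K \<inter> N \<noteq> {}} + card {K \<in> E. K \<inter> N = {}}"
    by (subst card_Un_disjoint[symmetric]) (auto intro: arg_cong[where f = card])
  moreover have "card {K \<in> E. K \<inter> N \<noteq> {}} = CC F N"
    unfolding E_def N_def
    by (intro card_components_meeting nbhd_subset chordal_nbhd_conn[OF ch AV vA])
  moreover have "CC F A = Suc (card {K \<in> E. K \<inter> N = {}})"
    unfolding E_def N_def by (rule CC_delete_vertex[OF fin vA])
  moreover have "CC F (A - {v}) = card E" unfolding E_def CC_def ..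
  ultimately show ?thesis unfolding N_def by simp
qed


section \<open>The clique Euler characteristic\<close>

definition clique_euler :: "'a graph \<Rightarrow> 'a set \<Rightarrow> real" where
  "clique_euler F A = (\<Sum>\<sigma>\<in>Pow A. if \<sigma> \<noteq> {} \<and> clique F \<sigma> then - ((-1) ^ card \<sigma>) else 0)"

lemma clique_insert_iff:
  assumes v: "v \<in> verts F" and tau: "\<tau> \<subseteq> A - {v}"
  shows "clique F (insert v \<tau>) \<longleftrightarrow> clique F \<tau> \<and> \<tau> \<subseteq> nbhd F A v"
proof
  assume "clique F (insert v \<tau>)"
  then show "clique F \<tau> \<and> \<tau> \<subseteq> nbhd F A v"
    using tau unfolding clique_def nbhd_def by auto
next
  assume c: "clique F \<tau> \<and> \<tau> \<subseteq> nbhd F A v"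
  then have "adj F v w" "adj F w v" if "w \<in> \<tau>" for w
    using that adj_sym[of F v w] unfolding nbhd_def by auto
  then show "clique F (insert v \<tau>)"
    using c v unfolding clique_def by auto
qed

lemma clique_euler_step:
  fixes F :: "'a graph"
  assumes AV: "A \<subseteq> verts F" and fin: "finite A" and vA: "v \<in> A"
  shows "clique_euler F A = clique_euler F (A - {v}) + 1 - clique_euler F (nbhd F A v)"
proof -
  define A' where "A' = A - {v}"
  define N where "N = nbhd F A v"
  define g where "g \<sigma> = (if \<sigma> \<noteq> {} \<and> clique F \<sigma> then - ((-1::real) ^ card \<sigma>) else 0)" for \<sigma>
  have A: "A = insert v A'" "v \<notin> A'" and finA': "finite A'" using vA fin unfolding A'_def by auto
  have NA': "N \<subseteq> A'" unfolding N_def A'_def by (rule nbhd_subset)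
  have "clique_euler F A = (\<Sum>\<tau>\<in>Pow A'. g \<tau>) + (\<Sum>\<tau>\<in>Pow A'. g (insert v \<tau>))"
    unfolding clique_euler_def g_def[symmetric] A(1) by (rule sum_Pow_insert[OF finA' A(2)])
  also have "(\<Sum>\<tau>\<in>Pow A'. g (insert v \<tau>)) = (\<Sum>\<tau>\<in>Pow A'. if clique F \<tau> \<and> \<tau> \<subseteq> N then (-1) ^ card \<tau> else 0)"
  proof (rule sum.cong)
    fix \<tau> assume "\<tau> \<in> Pow A'"
    then have "\<tau> \<subseteq> A - {v}" "finite \<tau>" "v \<notin> \<tau>" using finA' A(2) finite_subset unfolding A'_def by auto
    then show "g (insert v \<tau>) = (if clique F \<tau> \<and> \<tau> \<subseteq> N then (-1) ^ card \<tau> else 0)"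
      using clique_insert_iff[of v F \<tau> A] vA AV unfolding g_def N_def by auto
  qed simp
  also have "\<dots> = (\<Sum>\<tau>\<in>Pow N. if clique F \<tau> then (-1) ^ card \<tau> else 0)"
    using finA' NA' by (intro sum.mono_neutral_cong_right) auto
  also have "\<dots> = (\<Sum>\<tau>\<in>Pow N. (if \<tau> = {} then 1 else 0) - g \<tau>)"
    by (rule sum.cong) (auto simp: g_def clique_def)
  also have "\<dots> = 1 - clique_euler F N"
    using finite_subset[OF NA' finA'] unfolding clique_euler_def g_def by (simp add: sum_subtractf sum.delta)
  finally show ?thesis unfolding clique_euler_def g_def A'_def N_def by simp
qed

lemma CC_eq_clique_euler:
  fixes F :: "'a graph"
  assumes ch: "chordal F" and "A \<subseteq> verts F" "finite A"
  shows "real (CC F A) = clique_euler F A"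
  using assms(2,3)
proof (induction "card A" arbitrary: A rule: less_induct)
  case less
  show ?case
  proof (cases "A = {}")
    case True
    then show ?thesis by (simp add: CC_def clique_euler_def)
  next
    case False
    then obtain v where vA: "v \<in> A" by blast
    have smaller: "card (A - {v}) < card A" using less.prems(2) vA by (rule card_Diff1_less)
    moreover have "card (nbhd F A v) \<le> card (A - {v})"
      using less.prems by (intro card_mono) (auto simp: nbhd_subset)
    moreover have "nbhd F A v \<subseteq> A" using nbhd_subset[of F A v] by blast
    ultimately have "real (CC F (A - {v})) = clique_euler F (A - {v})"
      and "real (CC F (nbhd F A v)) = clique_euler F (nbhd F A v)"
      using less.prems by (auto intro!: less.hyps dest: finite_subset)
    then show ?thesis
      using CC_step[OF ch less.prems vA] clique_euler_step[OF less.prems vA] by simp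
  qed
qed


section \<open>The nerve of the maximal cliques\<close>

lemma clique_subset: "clique F C \<Longrightarrow> \<sigma> \<subseteq> C \<Longrightarrow> clique F \<sigma>"
  unfolding clique_def by (meson subsetD subset_trans)

lemma MaxCliques_subset: "C \<in> MaxCliques F \<Longrightarrow> C \<subseteq> verts F"
  unfolding MaxCliques_def clique_def by auto

lemma finite_MaxCliques: "graph F \<Longrightarrow> finite (MaxCliques F)"
  unfolding graph_def by (metis MaxCliques_subset Pow_iff finite_Pow_iff finite_subset subsetI)

text \<open>In a finite graph every clique extends to a maximal one (take a largest clique containing it).\<close>
lemma clique_in_MaxClique:
  assumes g: "graph F" and c: "clique F \<sigma>"
  shows "\<exists>C\<in>MaxCliques F. \<sigma> \<subseteq> C"
proof -
  define S where "S = {D. clique F D \<and> \<sigma> \<subseteq> D}"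
  have finV: "finite (verts F)" using g unfolding graph_def by simp
  have "S \<subseteq> Pow (verts F)" unfolding S_def clique_def by auto
  then have finS: "finite S" using finV finite_subset by blast
  have "\<sigma> \<in> S" using c unfolding S_def by simp
  then have "Max (card ` S) \<in> card ` S" using finS by (intro Max_in) auto
  then obtain D where D: "D \<in> S" "card D = Max (card ` S)" by auto
  have largest: "card D' \<le> card D" if "D' \<in> S" for D' using D(2) finS that by simp
  have "D \<in> MaxCliques F"
    unfolding MaxCliques_def
  proof (intro CollectI conjI allI impI)
    show "clique F D" using D(1) unfolding S_def by simp
    fix D' assume D': "clique F D' \<and> D \<subseteq> D'"
    then have "D' \<in> S" using D(1) unfolding S_def by auto
    moreover have "finite D'" using D' finV unfolding clique_def by (auto intro: finite_subset)
    ultimately show "D' = D" using D' largest by (metis card_seteq)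
  qed
  then show ?thesis using D(1) unfolding S_def by auto
qed

text \<open>Since the empty set is a clique, every finite graph has a maximal clique.\<close>
lemma MaxCliques_nonempty: "graph F \<Longrightarrow> MaxCliques F \<noteq> {}"
  using clique_in_MaxClique[of F "{}"] by (auto simp: clique_def)

lemma clique_indicator:
  fixes F :: "'a graph"
  assumes g: "graph F"
  shows "(if clique F \<sigma> then 1 else 0) =
    (\<Sum>S\<in>Pow (MaxCliques F) - {{}}. - ((-1::real) ^ card S) * (if \<sigma> \<subseteq> \<Inter>S then 1 else 0))"
proof -
  define M\<sigma> where "M\<sigma> = {C \<in> MaxCliques F. \<sigma> \<subseteq> C}"
  have "M\<sigma> \<noteq> {} \<longleftrightarrow> clique F \<sigma>"
  proof
    assume "M\<sigma> \<noteq> {}"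
    then obtain C where "C \<in> MaxCliques F" "\<sigma> \<subseteq> C" unfolding M\<sigma>_def by auto
    then show "clique F \<sigma>" unfolding MaxCliques_def by (auto intro: clique_subset)
  qed (use clique_in_MaxClique[OF g] in \<open>auto simp: M\<sigma>_def\<close>)
  moreover have "(\<Sum>S\<in>Pow (MaxCliques F) - {{}}. - ((-1::real) ^ card S) * (if \<sigma> \<subseteq> \<Inter>S then 1 else 0))
      = (\<Sum>S\<in>Pow (MaxCliques F) - {{}}. - ((-1::real) ^ card S) * (if S \<subseteq> M\<sigma> then 1 else 0))"
    unfolding M\<sigma>_def by (intro sum.cong) auto
  moreover have "MaxCliques F \<inter> M\<sigma> = M\<sigma>" unfolding M\<sigma>_def by auto
  ultimately show ?thesis
    using alternating_sum_Pow_within[OF finite_MaxCliques[OF g], of M\<sigma>] by auto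
qed

lemma clique_euler_nerve:
  fixes F :: "'a graph"
  assumes g: "graph F" and AV: "A \<subseteq> verts F"
  shows "clique_euler F A
       = (\<Sum>S\<in>Pow (MaxCliques F) - {{}}. - ((-1::real) ^ card S) * (if \<Inter>S \<inter> A \<noteq> {} then 1 else 0))"
proof -
  define M where "M = Pow (MaxCliques F) - {{}}"
  define P where "P = Pow A - {{}}"
  define c where "c \<sigma> = - ((-1::real) ^ card \<sigma>)" for \<sigma> :: "'a set"
  define d where "d S = - ((-1::real) ^ card S)" for S :: "'a set set"
  have finA: "finite A" using g AV unfolding graph_def by (auto intro: finite_subset)
  have "clique_euler F A = (\<Sum>\<sigma>\<in>P. c \<sigma> * (if clique F \<sigma> then 1 else 0))"
    unfolding clique_euler_def P_def c_def using finA
    by (intro sum.mono_neutral_cong_right) auto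
  also have "\<dots> = (\<Sum>\<sigma>\<in>P. c \<sigma> * (\<Sum>S\<in>M. d S * (if \<sigma> \<subseteq> \<Inter>S then 1 else 0)))"
    unfolding M_def d_def P_def by (intro sum.cong refl) (simp add: clique_indicator[OF g])
  also have "\<dots> = (\<Sum>S\<in>M. d S * (\<Sum>\<sigma>\<in>P. c \<sigma> * (if \<sigma> \<subseteq> \<Inter>S then 1 else 0)))"
    unfolding sum_distrib_left by (subst sum.swap) (simp add: mult.left_commute)
  also have "\<dots> = (\<Sum>S\<in>M. d S * (if \<Inter>S \<inter> A \<noteq> {} then 1 else 0))"
    unfolding P_def c_def using alternating_sum_Pow_within[OF finA] by (simp add: Int_commute)
  finally show ?thesis unfolding M_def d_def .
qed


section \<open>Summing the transform L\<close>

lemma sum_covering_subsets: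
  assumes "B \<subseteq> V" "V - B \<subseteq> J"
  shows "(\<Sum>A\<in>{A \<in> Pow J. A \<union> B = V}. f A) = (\<Sum>C\<in>Pow (B \<inter> J). f ((V - B) \<union> C))"
proof -
  have "inj_on (\<lambda>C. (V - B) \<union> C) (Pow (B \<inter> J))" by (rule inj_onI) blast
  moreover have "(\<lambda>C. (V - B) \<union> C) ` Pow (B \<inter> J) = {A \<in> Pow J. A \<union> B = V}"
  proof
    show "(\<lambda>C. (V - B) \<union> C) ` Pow (B \<inter> J) \<subseteq> {A \<in> Pow J. A \<union> B = V}" using assms by auto
    show "{A \<in> Pow J. A \<union> B = V} \<subseteq> (\<lambda>C. (V - B) \<union> C) ` Pow (B \<inter> J)"
    proof
      fix A assume "A \<in> {A \<in> Pow J. A \<union> B = V}"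
      then have "A = (V - B) \<union> (A \<inter> B)" "A \<inter> B \<in> Pow (B \<inter> J)" by auto
      then show "A \<in> (\<lambda>C. (V - B) \<union> C) ` Pow (B \<inter> J)" by blast
    qed
  qed
  ultimately show ?thesis by (metis sum.reindex_cong)
qed

text \<open>The signed count of the sets A \<subseteq> J that cover V together with a fixed B \<subseteq> V:
  it is nonzero only for \<open>B = V - J\<close>, where the only such A is J itself.\<close>
lemma alternating_sum_covering:
  assumes fin: "finite V" and JV: "J \<subseteq> V" and BV: "B \<subseteq> V"
  shows "(\<Sum>A\<in>{A \<in> Pow J. A \<union> B = V}. - ((-1::real) ^ card (A \<inter> B))) = (if B = V - J then -1 else 0)"
proof (cases "V - B \<subseteq> J")
  case True
  have finBJ: "finite (B \<inter> J)" using fin BV by (auto intro: finite_subset)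
  have "(\<Sum>A\<in>{A \<in> Pow J. A \<union> B = V}. - ((-1::real) ^ card (A \<inter> B)))
      = (\<Sum>C\<in>Pow (B \<inter> J). - ((-1::real) ^ card (((V - B) \<union> C) \<inter> B)))"
    by (rule sum_covering_subsets[OF BV True])
  also have "\<dots> = (\<Sum>C\<in>Pow (B \<inter> J). - ((-1::real) ^ card C))"
  proof (intro sum.cong refl)
    fix C assume "C \<in> Pow (B \<inter> J)"
    then have "((V - B) \<union> C) \<inter> B = C" by blast
    then show "- ((-1::real) ^ card (((V - B) \<union> C) \<inter> B)) = - ((-1) ^ card C)" by simp
  qed
  also have "\<dots> = (if B \<inter> J = {} then -1 else 0)"
    using alternating_sum_Pow[OF finBJ] by (simp add: sum_negf)
  also have "B \<inter> J = {} \<longleftrightarrow> B = V - J" using True BV JV by blast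
  finally show ?thesis .
next
  case False
  then have empty: "{A \<in> Pow J. A \<union> B = V} = {}" and "B \<noteq> V - J" using JV by blast+
  then show ?thesis by (simp only: empty sum.empty if_False)
qed

lemma sum_L_Pow:
  assumes fin: "finite V" and JV: "J \<subseteq> V"
  shows "(\<Sum>A\<in>Pow J. L V g A) = - g (V - J)"
proof -
  have "L V g A = (\<Sum>B\<in>Pow V. if A \<union> B = V then - ((-1) ^ card (A \<inter> B)) * g B else 0)" for A
  proof -
    have "{B. B \<subseteq> V \<and> A \<union> B = V} = {B \<in> Pow V. A \<union> B = V}" by auto
    then show ?thesis unfolding L_def using fin by (simp only: sum.inter_filter finite_Pow_iff)
  qed
  then have "(\<Sum>A\<in>Pow J. L V g A)
      = (\<Sum>A\<in>Pow J. \<Sum>B\<in>Pow V. if A \<union> B = V then - ((-1) ^ card (A \<inter> B)) * g B else 0)"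
    by simp
  also have "\<dots> = (\<Sum>B\<in>Pow V. g B * (\<Sum>A\<in>{A \<in> Pow J. A \<union> B = V}. - ((-1) ^ card (A \<inter> B))))"
  proof (subst sum.swap, intro sum.cong refl)
    fix B
    have "finite (Pow J)" using fin JV by (auto intro: finite_subset)
    then have "(\<Sum>A\<in>Pow J. if A \<union> B = V then - ((-1) ^ card (A \<inter> B)) * g B else 0)
        = (\<Sum>A\<in>{A \<in> Pow J. A \<union> B = V}. - ((-1) ^ card (A \<inter> B)) * g B)"
      by (simp only: sum.inter_filter)
    then show "(\<Sum>A\<in>Pow J. if A \<union> B = V then - ((-1) ^ card (A \<inter> B)) * g B else 0)
        = g B * (\<Sum>A\<in>{A \<in> Pow J. A \<union> B = V}. - ((-1) ^ card (A \<inter> B)))"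
      by (simp add: sum_distrib_left mult.commute)
  qed
  also have "\<dots> = (\<Sum>B\<in>Pow V. if B = V - J then - g B else 0)"
    using alternating_sum_covering[OF fin JV] by (intro sum.cong refl) simp
  also have "\<dots> = - g (V - J)" using fin by simp
  finally show ?thesis .
qed

lemma sum_L_meeting:
  assumes fin: "finite V" and IV: "I \<subseteq> V"
  shows "(\<Sum>A\<in>Pow V. L V g A * (if I \<inter> A \<noteq> {} then 1 else 0)) = g I - g {}"
proof -
  have "(\<Sum>A\<in>Pow V. L V g A * (if I \<inter> A \<noteq> {} then 1 else 0))
      = (\<Sum>A\<in>Pow V. L V g A) - (\<Sum>A\<in>Pow V. if A \<subseteq> V - I then L V g A else 0)"
    by (simp add: sum_subtractf[symmetric]) (intro sum.cong refl; auto)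
  also have "(\<Sum>A\<in>Pow V. if A \<subseteq> V - I then L V g A else 0) = (\<Sum>A\<in>Pow (V - I). L V g A)"
    using fin by (simp add: sum.inter_filter[symmetric]) (intro sum.cong; auto)
  also have "V - (V - I) = I" using IV by blast
  then have "(\<Sum>A\<in>Pow V. L V g A) - (\<Sum>A\<in>Pow (V - I). L V g A) = g I - g {}"
    using sum_L_Pow[OF fin, of V g] sum_L_Pow[OF fin, of "V - I" g] by simp
  finally show ?thesis .
qed


text \<open>The identity (c) for an arbitrary map \<open>\<psi>\<close> from the vertices of a chordal graph into
  a finite set V'.\<close>
lemma nerve_identity:
  fixes F :: "'a graph" and V' :: "'b set" and \<psi> :: "'a \<Rightarrow> 'b" and g :: "'b set \<Rightarrow> real"
  assumes gr: "graph F" and ch: "chordal F" and finV': "finite V'" and \<psi>: "\<And>v. v \<in> verts F \<Longrightarrow> \<psi> v \<in> V'"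
  shows "(\<Sum>S\<in>Pow (MaxCliques F). - ((-1) ^ card S) * g (\<psi> ` Inter0 S))
       = (\<Sum>A\<in>Pow V'. L V' g A * real (CC F {v \<in> verts F. \<psi> v \<in> A}))"
proof -
  define M where "M = Pow (MaxCliques F) - {{}}"
  define c where "c S = - ((-1::real) ^ card S)" for S :: "'a set set"
  define meets where "meets S A = (if \<psi> ` \<Inter>S \<inter> A \<noteq> {} then 1 else (0::real))" for S A
  have finV: "finite (verts F)" using gr unfolding graph_def by simp
  have InterV: "\<Inter>S \<subseteq> verts F" if "S \<in> M" for S
    using that MaxCliques_subset unfolding M_def by blast
  have CC_nerve: "real (CC F {v \<in> verts F. \<psi> v \<in> A}) = (\<Sum>S\<in>M. c S * meets S A)" for A
  proof -
    have "real (CC F {v \<in> verts F. \<psi> v \<in> A}) = clique_euler F {v \<in> verts F. \<psi> v \<in> A}"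
      using finV by (intro CC_eq_clique_euler[OF ch]) auto
    also have "\<dots> = (\<Sum>S\<in>M. c S * (if \<Inter>S \<inter> {v \<in> verts F. \<psi> v \<in> A} \<noteq> {} then 1 else 0))"
      unfolding M_def c_def by (intro clique_euler_nerve[OF gr]) auto
    also have "\<dots> = (\<Sum>S\<in>M. c S * meets S A)"
    proof (intro sum.cong refl)
      fix S assume "S \<in> M"
      then have "\<Inter>S \<inter> {v \<in> verts F. \<psi> v \<in> A} \<noteq> {} \<longleftrightarrow> \<psi> ` \<Inter>S \<inter> A \<noteq> {}"
        using InterV by blast
      then show "c S * (if \<Inter>S \<inter> {v \<in> verts F. \<psi> v \<in> A} \<noteq> {} then 1 else 0) = c S * meets S A"
        unfolding meets_def by simp
    qed
    finally show ?thesis .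
  qed
  have "(\<Sum>A\<in>Pow V'. L V' g A * real (CC F {v \<in> verts F. \<psi> v \<in> A}))
      = (\<Sum>S\<in>M. c S * (\<Sum>A\<in>Pow V'. L V' g A * meets S A))"
    unfolding CC_nerve sum_distrib_left by (subst sum.swap) (simp add: mult.left_commute)
  also have "\<dots> = (\<Sum>S\<in>M. c S * (g (\<psi> ` \<Inter>S) - g {}))"
    using InterV \<psi> unfolding meets_def by (intro sum.cong refl) (subst sum_L_meeting[OF finV']; blast)
  also have "\<dots> = (\<Sum>S\<in>M. c S * g (\<psi> ` \<Inter>S)) - g {} * (\<Sum>S\<in>M. c S)"
    by (simp add: right_diff_distrib sum_subtractf sum_distrib_left mult.commute)
  also have "(\<Sum>S\<in>M. c S) = 1"
    using alternating_sum_Pow_nonempty[OF finite_MaxCliques[OF gr]] MaxCliques_nonempty[OF gr]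
    unfolding M_def c_def by simp
  also have "(\<Sum>S\<in>M. c S * g (\<psi> ` \<Inter>S)) - g {} * 1
      = (\<Sum>S\<in>Pow (MaxCliques F). - ((-1) ^ card S) * g (\<psi> ` Inter0 S))"
    using finite_MaxCliques[OF gr] unfolding M_def c_def Inter0_def
    by (subst sum.remove[of _ "{}"]) (auto intro!: sum.cong)
  finally show ?thesis by simp
qed

theorem lemma3p5:
  fixes F :: "'a graph"
  assumes "graph F" and "chordal F"
  shows "(\<forall>f :: 'a set \<Rightarrow> real.
            (\<Sum>S \<in> Pow (MaxCliques F). - ((-1) ^ card S) * f (Inter0 S))
            = (\<Sum>A \<in> Pow (verts F). L (verts F) f A * real (CC F A)))
       \<and> (\<forall>(G :: 'b graph) (\<phi> :: 'a \<Rightarrow> 'b) (g :: 'b set \<Rightarrow> real).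
            graph G \<longrightarrow> hom F G \<phi> \<longrightarrow>
            (\<Sum>S \<in> Pow (MaxCliques F). - ((-1) ^ card S) * g (\<phi> ` Inter0 S))
            = (\<Sum>A \<in> Pow (verts G). L (verts G) g A * real (CC F {v \<in> verts F. \<phi> v \<in> A})))"
proof (intro conjI allI impI)
  fix f :: "'a set \<Rightarrow> real"
  have finV: "finite (verts F)" using assms(1) unfolding graph_def by simp
  have "{v \<in> verts F. v \<in> A} = A" if "A \<in> Pow (verts F)" for A using that by auto
  then show "(\<Sum>S \<in> Pow (MaxCliques F). - ((-1) ^ card S) * f (Inter0 S))
      = (\<Sum>A \<in> Pow (verts F). L (verts F) f A * real (CC F A))"
    using nerve_identity[OF assms finV, of "\<lambda>v. v" f] by simp
next
  fix G :: "'b graph" and \<phi> :: "'a \<Rightarrow> 'b" and g :: "'b set \<Rightarrow> real"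
  assume "graph G" and "hom F G \<phi>"
  then have "finite (verts G)" and "\<And>v. v \<in> verts F \<Longrightarrow> \<phi> v \<in> verts G"
    unfolding graph_def hom_def by auto
  then show "(\<Sum>S \<in> Pow (MaxCliques F). - ((-1) ^ card S) * g (\<phi> ` Inter0 S))
      = (\<Sum>A \<in> Pow (verts G). L (verts G) g A * real (CC F {v \<in> verts F. \<phi> v \<in> A}))"
    by (rule nerve_identity[OF assms])
qed

end
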